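(* Let $n\ge6$ be even, $l$ an integer with $2\le l<n/2$, $m\in\mathbb N$, $B=B^{(1,n,l)}$, and assume the seeds are i.i.d. uniform on $[n]$. Then for every $i\in B\setminus\{l+1\}$, $$\mathsf P\bigl(\Xi_B(l+1)\le\Xi_B(i)\bigr)\le\exp\Bigl\{m\log\Bigl[1-\tfrac1n\bigl(\sqrt{l+1}-\sqrt2\bigr)^2\Bigr]\Bigr\}.$$
   Context: Candidates $[n]$, $m$ voters; voter $j$ has the clockwise oriented preference list $(s_j,s_j+1,\dots,n,1,\dots,s_j-1)$ with seed $s_j$; the seeds are independent and uniform on $[n]$. In an election among a non-empty $S\subseteq[n]$ each voter votes for the first candidate of $S$ in its list; $\Xi_S(i)$ is the number of votes for $i\in S$. For even $n$ and $2\le l<n/2$: $B^{(1,n,l)}=\{n-l+1,\dots,n\}\cup\{l+2i-1:1\le i\le (n-2l)/2\}$ (the complement of $A^{(1,n,l)}=\{1,\dots,l\}\cup\{l+2i:1\le i\le(n-2l)/2\}$). *)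

theory Defs
  imports Complex_Main "HOL-Library.FuncSet"
begin

definition pref_list :: "nat \<Rightarrow> nat \<Rightarrow> nat list" where
  "pref_list n s = [s..<n+1] @ [1..<s]"

definition vote :: "nat \<Rightarrow> nat set \<Rightarrow> nat \<Rightarrow> nat" where
  "vote n S s = hd (filter (\<lambda>c. c \<in> S) (pref_list n s))"

definition Xi :: "nat \<Rightarrow> nat \<Rightarrow> nat set \<Rightarrow> (nat \<Rightarrow> nat) \<Rightarrow> nat \<Rightarrow> nat" where
  "Xi n m S sd i = card {j \<in> {1..m}. vote n S (sd j) = i}"

text \<open>Probability of an event on seeds, the seeds being i.i.d. uniform on [n]
  (i.e. the seed vector is uniform on {1..m} \<rightarrow> {1..n}).\<close>
definition seed_prob :: "nat \<Rightarrow> nat \<Rightarrow> ((nat \<Rightarrow> nat) \<Rightarrow> bool) \<Rightarrow> real" where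
  "seed_prob n m P = real (card {sd \<in> {1..m} \<rightarrow>\<^sub>E {1..n}. P sd}) / real (n ^ m)"

definition B1 :: "nat \<Rightarrow> nat \<Rightarrow> nat set" where
  "B1 n l = {n - l + 1..n} \<union> {l + 2 * i - 1 | i. 1 \<le> i \<and> i \<le> (n - 2 * l) div 2}"

end

theory Submission
  imports Defs
begin

text \<open>Exponential tilting: for t \<ge> 1 the weight t ^ (Xi b - Xi a) of a seed vector dominates the
  indicator of Xi a \<le> Xi b, and as the seeds are independent the total weight is the m-th power
  of the one-seed weight sum n + (t - 1) \<beta> + (1 / t - 1) \<alpha>, where \<alpha> seeds vote for a and \<beta>
  for b.  The choice t = sqrt (\<alpha> / \<beta>) makes this n - (sqrt \<alpha> - sqrt \<beta>)^2.  In B1 n l the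
  smallest candidate l + 1 receives the seeds 1, ..., l + 1, while every other candidate has a
  predecessor in B1 n l at distance at most 2 and so receives at most 2 seeds.\<close>

definition seeds_voting_for :: "nat \<Rightarrow> nat set \<Rightarrow> nat \<Rightarrow> nat set" where
  "seeds_voting_for n S c = {s \<in> {1..n}. vote n S s = c}"

lemma card_PiE_count_le_tilted:
  fixes V :: "'a \<Rightarrow> 'c" and t :: real
  assumes "finite J" "finite A" "1 \<le> t"
  shows "real (card {sd \<in> J \<rightarrow>\<^sub>E A. card {j \<in> J. V (sd j) = a} \<le> card {j \<in> J. V (sd j) = b}})
    \<le> (\<Sum>s\<in>A. (if V s = b then t else 1) / (if V s = a then t else 1)) ^ card J"
proof -
  define w where "w s = (if V s = b then t else 1) / (if V s = a then t else 1)" for s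
  define P where "P sd \<longleftrightarrow> card {j \<in> J. V (sd j) = a} \<le> card {j \<in> J. V (sd j) = b}" for sd
  have prod_w: "(\<Prod>j\<in>J. w (sd j)) = t ^ card {j \<in> J. V (sd j) = b} / t ^ card {j \<in> J. V (sd j) = a}"
    for sd
    unfolding w_def prod_dividef using assms(1) by (simp add: prod.inter_filter[symmetric])
  have indicator_le: "of_bool (P sd) \<le> (\<Prod>j\<in>J. w (sd j))" for sd
  proof (cases "P sd")
    case True
    then show ?thesis
      unfolding prod_w P_def using assms(3) by (simp add: power_increasing)
  next
    case False
    then show ?thesis
      using assms(3) by (simp add: w_def prod_nonneg)
  qed
  have "real (card {sd \<in> J \<rightarrow>\<^sub>E A. P sd}) = (\<Sum>sd\<in>J \<rightarrow>\<^sub>E A. of_bool (P sd))"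
    using assms(1,2) by (simp add: sum_of_bool_eq finite_PiE Int_def)
  also have "\<dots> \<le> (\<Sum>sd\<in>J \<rightarrow>\<^sub>E A. \<Prod>j\<in>J. w (sd j))"
    by (rule sum_mono) (rule indicator_le)
  also have "\<dots> = (\<Prod>j\<in>J. \<Sum>s\<in>A. w s)"
    using assms(1,2) by (rule prod_sum_PiE[symmetric])
  also have "\<dots> = (\<Sum>s\<in>A. w s) ^ card J"
    by simp
  finally show ?thesis
    unfolding P_def w_def .
qed

lemma sum_tilted_le:
  fixes V :: "'a \<Rightarrow> 'c" and \<alpha> \<beta> :: real
  assumes "finite A" "a \<noteq> b" "0 < \<beta>" "\<beta> \<le> \<alpha>"
    and "\<alpha> \<le> card {s \<in> A. V s = a}" "card {s \<in> A. V s = b} \<le> \<beta>"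
  shows "(\<Sum>s\<in>A. (if V s = b then sqrt (\<alpha> / \<beta>) else 1) / (if V s = a then sqrt (\<alpha> / \<beta>) else 1))
    \<le> card A - (sqrt \<alpha> - sqrt \<beta>)\<^sup>2"
proof -
  define t where "t = sqrt (\<alpha> / \<beta>)"
  have "1 \<le> t"
    unfolding t_def using assms(3,4) by simp
  have "(\<Sum>s\<in>A. (if V s = b then t else 1) / (if V s = a then t else 1))
      = (\<Sum>s\<in>A. 1 + (if V s = b then t - 1 else 0) + (if V s = a then 1 / t - 1 else 0))"
    using assms(2) by (intro sum.cong) auto
  also have "\<dots> = card A + (t - 1) * card {s \<in> A. V s = b} + (1 / t - 1) * card {s \<in> A. V s = a}"
    using assms(1) by (simp add: sum.distrib sum.inter_filter[symmetric])
  also have "\<dots> \<le> card A + (t - 1) * \<beta> + (1 / t - 1) * \<alpha>"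
    using \<open>1 \<le> t\<close> assms(5,6) by (intro add_mono mult_left_mono mult_left_mono_neg) auto
  also have "\<dots> = card A - (sqrt \<alpha> - sqrt \<beta>)\<^sup>2"
  proof -
    have "0 < sqrt \<beta>" "0 < sqrt \<alpha>"
      using assms(3,4) by auto
    then show ?thesis
      unfolding t_def real_sqrt_divide
      using assms(3,4) by (simp add: field_simps power2_eq_square flip: real_sqrt_mult)
  qed
  finally show ?thesis
    unfolding t_def .
qed

lemma seed_prob_Xi_le_Xi:
  fixes \<alpha> \<beta> :: real
  assumes "a \<noteq> b" "0 < \<beta>" "\<beta> \<le> \<alpha>"
    and "\<alpha> \<le> card (seeds_voting_for n S a)" "card (seeds_voting_for n S b) \<le> \<beta>"
  shows "seed_prob n m (\<lambda>sd. Xi n m S sd a \<le> Xi n m S sd b)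
    \<le> exp (m * ln (1 - (sqrt \<alpha> - sqrt \<beta>)\<^sup>2 / n))"
proof -
  define c where "c = (sqrt \<alpha> - sqrt \<beta>)\<^sup>2"
  define t where "t = sqrt (\<alpha> / \<beta>)"
  define w where "w s = (if vote n S s = b then t else 1) / (if vote n S s = a then t else 1)" for s
  have "c < \<alpha>"
  proof -
    have "sqrt \<beta> \<le> sqrt \<alpha>" "0 < sqrt \<beta>"
      using assms(2,3) by auto
    then have "c < (sqrt \<alpha>)\<^sup>2"
      unfolding c_def by (intro power_strict_mono) auto
    then show ?thesis
      using assms(2,3) by simp
  qed
  moreover have "\<alpha> \<le> n"
    using assms(4) card_mono[of "{1..n}" "seeds_voting_for n S a"]
    unfolding seeds_voting_for_def by fastforce
  ultimately have "c < n"
    by linarith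
  moreover have "0 \<le> c"
    unfolding c_def by simp
  ultimately have "0 < n" "0 < 1 - c / n"
    by simp_all
  have "1 \<le> t"
    unfolding t_def using assms(2,3) by simp
  have sum_w: "(\<Sum>s\<in>{1..n}. w s) \<le> n - c"
    using sum_tilted_le[of "{1..n}" a b \<beta> \<alpha> "vote n S"] assms
    unfolding w_def t_def c_def seeds_voting_for_def by simp
  have "real (card {sd \<in> {1..m} \<rightarrow>\<^sub>E {1..n}. Xi n m S sd a \<le> Xi n m S sd b})
      \<le> (\<Sum>s\<in>{1..n}. w s) ^ m"
    using card_PiE_count_le_tilted[of "{1..m}" "{1..n}" t "vote n S" a b] \<open>1 \<le> t\<close>
    unfolding Xi_def w_def by simp
  also have "\<dots> \<le> (n - c) ^ m"
    using sum_w \<open>1 \<le> t\<close> by (intro power_mono) (auto simp: w_def intro: sum_nonneg)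
  finally have "seed_prob n m (\<lambda>sd. Xi n m S sd a \<le> Xi n m S sd b) \<le> (n - c) ^ m / n ^ m"
    unfolding seed_prob_def by (simp add: divide_right_mono)
  also have "\<dots> = (1 - c / n) ^ m"
    using \<open>0 < n\<close> by (simp add: power_divide[symmetric] diff_divide_distrib)
  also have "\<dots> = exp (m * ln (1 - c / n))"
    using \<open>0 < 1 - c / n\<close> by (simp add: exp_of_nat_mult)
  finally show ?thesis
    unfolding c_def .
qed

lemma vote_eq_Least:
  assumes "s \<le> n" "n \<in> S"
  shows "vote n S s = (LEAST c. c \<in> S \<and> s \<le> c)"
proof -
  define c where "c = (LEAST c. c \<in> S \<and> s \<le> c)"
  have "c \<in> S" "s \<le> c"
    unfolding c_def using LeastI[of "\<lambda>c. c \<in> S \<and> s \<le> c" n] assms by auto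
  have "c \<le> n"
    unfolding c_def using assms by (intro Least_le) auto
  have "[s..<n+1] = [s..<c] @ [c..<n+1]"
    using upt_add_eq_append[OF \<open>s \<le> c\<close>, of "n + 1 - c"] \<open>c \<le> n\<close> by simp
  also have "\<dots> = [s..<c] @ c # [Suc c..<n+1]"
    using \<open>c \<le> n\<close> by (simp add: upt_conv_Cons)
  finally have "[s..<n+1] = [s..<c] @ c # [Suc c..<n+1]" .
  moreover have "filter (\<lambda>x. x \<in> S) [s..<c] = []"
    unfolding c_def by (auto simp: filter_empty_conv dest: not_less_Least)
  ultimately show ?thesis
    using \<open>c \<in> S\<close> unfolding vote_def pref_list_def c_def[symmetric] by simp
qed

lemma card_seeds_voting_for_least:
  assumes "n \<in> S" "c \<in> S" "\<forall>y\<in>S. c \<le> y"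
  shows "c \<le> card (seeds_voting_for n S c)"
proof -
  have "c \<le> n"
    using assms(1,3) by blast
  have "vote n S s = c" if "s \<le> c" for s
  proof -
    have "vote n S s = (LEAST y. y \<in> S \<and> s \<le> y)"
      using that \<open>c \<le> n\<close> assms(1) by (intro vote_eq_Least) auto
    also have "\<dots> = c"
      using that assms(2,3) by (intro Least_equality) auto
    finally show ?thesis .
  qed
  then have "{1..c} \<subseteq> seeds_voting_for n S c"
    unfolding seeds_voting_for_def using \<open>c \<le> n\<close> by auto
  then show ?thesis
    using card_mono[of "seeds_voting_for n S c" "{1..c}"] unfolding seeds_voting_for_def by simp
qed

lemma card_seeds_voting_for_le_gap:
  assumes "n \<in> S" "y \<in> S" "y < c"
  shows "card (seeds_voting_for n S c) \<le> c - y"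
proof -
  have "s \<in> {y<..c}" if "s \<le> n" "vote n S s = c" for s
  proof -
    have c_Least: "c = (LEAST c. c \<in> S \<and> s \<le> c)"
      using that assms(1) by (simp add: vote_eq_Least)
    then have "s \<le> c"
      using LeastI[of "\<lambda>c. c \<in> S \<and> s \<le> c" n] that(1) assms(1) by auto
    moreover have "\<not> s \<le> y"
      using c_Least Least_le[of "\<lambda>c. c \<in> S \<and> s \<le> c" y] assms(2,3) by auto
    ultimately show ?thesis
      by simp
  qed
  then have "seeds_voting_for n S c \<subseteq> {y<..c}"
    unfolding seeds_voting_for_def by auto
  then show ?thesis
    using card_mono[of "{y<..c}"] by fastforce
qed

lemma top_mem_B1: "0 < l \<Longrightarrow> l \<le> n \<Longrightarrow> n \<in> B1 n l"
  unfolding B1_def by auto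

lemma Suc_l_mem_B1: "2 * l + 2 \<le> n \<Longrightarrow> l + 1 \<in> B1 n l"
  unfolding B1_def by (auto intro!: exI[of _ 1])

lemma B1_ge_Suc_l: "2 * l \<le> n \<Longrightarrow> y \<in> B1 n l \<Longrightarrow> l + 1 \<le> y"
  unfolding B1_def by auto

lemma B1_predecessor:
  assumes "even n" "2 * l < n" "i \<in> B1 n l" "i \<noteq> l + 1"
  shows "\<exists>y\<in>B1 n l. y < i \<and> i \<le> y + 2"
proof -
  consider "i \<in> {n - l + 1..n}" | k where "i = l + 2 * k - 1" "1 \<le> k" "k \<le> (n - 2 * l) div 2"
    using assms(3) unfolding B1_def by auto
  then show ?thesis
  proof cases
    case 1
    show ?thesis
    proof (cases "i = n - l + 1")
      case True
      define K where "K = (n - 2 * l) div 2"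
      have "1 \<le> K" "l + 2 * K - 1 = n - l - 1"
        using assms(1,2) unfolding K_def by presburger+
      then have "n - l - 1 \<in> B1 n l"
        unfolding B1_def K_def by (auto intro!: exI[of _ "(n - 2 * l) div 2"])
      then show ?thesis
        using True assms(2) by (intro bexI[of _ "n - l - 1"]) auto
    next
      case False
      then have "i - 1 \<in> B1 n l"
        using 1 unfolding B1_def by auto
      then show ?thesis
        using 1 False assms(2) by (intro bexI[of _ "i - 1"]) auto
    qed
  next
    case 2
    then have "2 \<le> k"
      using assms(4) by auto
    then have "l + 2 * (k - 1) - 1 \<in> B1 n l"
      using 2 unfolding B1_def by (auto intro!: exI[of _ "k - 1"])
    then show ?thesis
      using 2 \<open>2 \<le> k\<close> by (intro bexI[of _ "l + 2 * (k - 1) - 1"]) auto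
  qed
qed

theorem mainTheorem4:
  fixes n l m i :: nat
  assumes "n \<ge> 6" and "even n" and "2 \<le> l" and "2 * l < n"
    and "i \<in> B1 n l" and "i \<noteq> l + 1"
  shows "seed_prob n m (\<lambda>sd. Xi n m (B1 n l) sd (l + 1) \<le> Xi n m (B1 n l) sd i)
         \<le> exp (real m * ln (1 - (sqrt (real l + 1) - sqrt 2)^2 / real n))"
proof -
  have "n \<in> B1 n l"
    using assms(3,4) by (simp add: top_mem_B1)
  have "2 * l + 2 \<le> n"
    using assms(2,4) by presburger
  then have "l + 1 \<le> card (seeds_voting_for n (B1 n l) (l + 1))"
    using \<open>n \<in> B1 n l\<close> by (intro card_seeds_voting_for_least Suc_l_mem_B1 ballI B1_ge_Suc_l) auto
  moreover obtain y where "y \<in> B1 n l" "y < i" "i \<le> y + 2"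
    using B1_predecessor assms(2,4,5,6) by blast
  then have "card (seeds_voting_for n (B1 n l) i) \<le> 2"
    using card_seeds_voting_for_le_gap[OF \<open>n \<in> B1 n l\<close>] by fastforce
  ultimately show ?thesis
    using seed_prob_Xi_le_Xi[of "l + 1" i 2 "real l + 1" n "B1 n l" m] assms(3,6) by simp
qed

end
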